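(* Let $G$ be a finite group of order $n$ and $S\subseteq G$ with $gSg^{-1}=S$ for all $g$, $S$ generating $G$, $S=S^{-1}$, $1\notin S$; put $r=\#S$ and assume $\mathrm{Cay}(G,S)$ is not a cycle graph. Let $\ell$ be a prime and $\beta:S\to\mathbb{Z}_\ell$ satisfy: $\beta(gag^{-1})=\beta(a)$; the image of $\beta$ generates $\mathbb{Z}_\ell$; $\beta(s^{-1})=-\beta(s)$; the image of $\beta$ lies in $\mathbb{Z}$; and there exist $m>0$, $(h_1,\dots,h_m)\in S^m$ with $h_1\cdots h_m\in S$ and $\beta(h_1\cdots h_m)\not\equiv\sum_i\beta(h_i)\pmod\ell$. Let $\chi_1,\chi_2\in\mathrm{Irr}(G)$ be congruent characters, i.e. $\chi_1(g)\equiv\chi_2(g)\pmod{\varpi}$ for all $g\in G$, and suppose that $d:=\chi_1(1)=\chi_2(1)$ is prime to $\ell$. Then $\mu_{\chi_1}=0$ if and only if $\mu_{\chi_2}=0$, and if these conditions hold then $\lambda_{\chi_1}=\lambda_{\chi_2}$.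
   Context: Fix $\bar{\mathbb{Q}}\hookrightarrow\bar{\mathbb{Q}}_\ell$ and a finite extension $\mathcal{K}/\mathbb{Q}_\ell$ containing all $n$-th roots of unity, with valuation ring $\mathcal{O}$ and uniformizer $\varpi$. $\mathrm{Irr}(G)$ is the set of irreducible characters $\chi:G\to\bar{\mathbb{Q}}_\ell$ (values in $\mathcal{O}$). For $\chi\in\mathrm{Irr}(G)$, $Q_\chi(T):=r\chi(1)-\sum_{t\in S}(1+T)^{\beta(t)}\chi(t)\in\mathcal{O}[[T]]$ (with $(1+T)^b$, $b\in\mathbb{Z}$, viewed in $\mathbb{Z}_\ell[[T]]$); writing $Q_\chi(T)=\varpi^{\mu}f(T)u(T)$ with $f\in\mathcal{O}[T]$ a distinguished polynomial and $u\in\mathcal{O}[[T]]^\times$, set $\mu_\chi:=\mu$ and $\lambda_\chi:=\deg f$. *)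

theory Defs
  imports "HOL-Algebra.Group" "HOL-Algebra.Generated_Groups"
    "HOL-Computational_Algebra.Formal_Power_Series"
    "HOL-Computational_Algebra.Polynomial"
    "Jordan_Normal_Form.Matrix"
begin

definition cayley_adj :: "('a, 'b) monoid_scheme \<Rightarrow> 'a set \<Rightarrow> 'a \<Rightarrow> 'a \<Rightarrow> bool" where
  "cayley_adj G S x y \<longleftrightarrow> x \<in> carrier G \<and> y \<in> carrier G \<and> (\<exists>s\<in>S. y = x \<otimes>\<^bsub>G\<^esub> s)"

definition is_cycle_graph :: "'a set \<Rightarrow> ('a \<Rightarrow> 'a \<Rightarrow> bool) \<Rightarrow> bool" where
  "is_cycle_graph V E \<longleftrightarrow>
     (\<exists>vs. distinct vs \<and> set vs = V \<and> length vs \<ge> 3 \<and>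
        (\<forall>x y. E x y \<longleftrightarrow>
           (\<exists>i<length vs. (x = vs ! i \<and> y = vs ! ((i + 1) mod length vs)) \<or>
                          (y = vs ! i \<and> x = vs ! ((i + 1) mod length vs)))))"

definition mat_trace :: "'c::comm_monoid_add mat \<Rightarrow> 'c" where
  "mat_trace A = (\<Sum>i<dim_row A. A $$ (i, i))"

definition is_rep :: "('a, 'b) monoid_scheme \<Rightarrow> nat \<Rightarrow> ('a \<Rightarrow> complex mat) \<Rightarrow> bool" where
  "is_rep G d \<rho> \<longleftrightarrow>
     (\<forall>g\<in>carrier G. \<rho> g \<in> carrier_mat d d) \<and>
     \<rho> \<one>\<^bsub>G\<^esub> = 1\<^sub>m d \<and>
     (\<forall>g\<in>carrier G. \<forall>h\<in>carrier G. \<rho> (g \<otimes>\<^bsub>G\<^esub> h) = \<rho> g * \<rho> h)"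

definition is_subspace_vec :: "nat \<Rightarrow> complex vec set \<Rightarrow> bool" where
  "is_subspace_vec d W \<longleftrightarrow> W \<subseteq> carrier_vec d \<and> 0\<^sub>v d \<in> W \<and>
     (\<forall>v\<in>W. \<forall>w\<in>W. v + w \<in> W) \<and> (\<forall>c. \<forall>v\<in>W. c \<cdot>\<^sub>v v \<in> W)"

definition is_irred_rep :: "('a, 'b) monoid_scheme \<Rightarrow> nat \<Rightarrow> ('a \<Rightarrow> complex mat) \<Rightarrow> bool" where
  "is_irred_rep G d \<rho> \<longleftrightarrow> is_rep G d \<rho> \<and> d > 0 \<and>
     (\<forall>W. is_subspace_vec d W \<and> (\<forall>g\<in>carrier G. \<forall>w\<in>W. \<rho> g *\<^sub>v w \<in> W)
          \<longrightarrow> W = {0\<^sub>v d} \<or> W = carrier_vec d)"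

(* Irr(G): characters of irreducible complex representations (values are algebraic
   integers; via the fixed embedding of Qbar into Qbar_l these are exactly Irr(G) over Qbar_l). *)
definition Irr :: "('a, 'b) monoid_scheme \<Rightarrow> ('a \<Rightarrow> complex) set" where
  "Irr G = {\<chi>. \<exists>d \<rho>. is_irred_rep G d \<rho> \<and>
               \<chi> = (\<lambda>g. if g \<in> carrier G then mat_trace (\<rho> g) else 0)}"

(* A is the valuation ring of the l-adic valuation on Qbar (a subfield of C) induced by
   an embedding Qbar -> Qbar_l: A = {x in Qbar. |x|_l <= 1}.  These are exactly the
   valuation rings of Qbar in which l is not a unit. *)
definition l_adic_valring :: "nat \<Rightarrow> complex set \<Rightarrow> bool" where
  "l_adic_valring l A \<longleftrightarrow>
     A \<subseteq> {x. algebraic x} \<and> 0 \<in> A \<and> 1 \<in> A \<and>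
     (\<forall>x\<in>A. \<forall>y\<in>A. x + y \<in> A \<and> x - y \<in> A \<and> x * y \<in> A) \<and>
     (\<forall>x. algebraic x \<and> x \<noteq> 0 \<longrightarrow> x \<in> A \<or> inverse x \<in> A) \<and>
     inverse (of_nat l) \<notin> A"

(* maximal ideal (generated by the uniformizer varpi) *)
definition max_ideal :: "complex set \<Rightarrow> complex set" where
  "max_ideal A = {x\<in>A. x = 0 \<or> inverse x \<notin> A}"

(* Q_chi(T) = r chi(1) - sum_{t in S} (1+T)^{beta t} chi(t);
   (1+T)^b = fps_binomial b = sum_k (b gchoose k) T^k, valid for all b in Z. *)
definition Q_series :: "('a, 'b) monoid_scheme \<Rightarrow> 'a set \<Rightarrow> ('a \<Rightarrow> int) \<Rightarrow> ('a \<Rightarrow> complex) \<Rightarrow> complex fps" where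
  "Q_series G S \<beta> \<chi> =
     fps_const (of_nat (card S) * \<chi> \<one>\<^bsub>G\<^esub>) -
     (\<Sum>t\<in>S. fps_const (\<chi> t) * fps_binomial (of_int (\<beta> t)))"

(* Writing Q = varpi^mu f u (Weierstrass preparation in O[[T]]):
   mu = 0 iff some coefficient of Q is a unit of O;
   lambda = deg f = least index k at which the coefficient of Q has minimal valuation,
   i.e. Q_k is nonzero and divides every coefficient of Q in O. *)
definition mu_is_zero :: "complex set \<Rightarrow> complex fps \<Rightarrow> bool" where
  "mu_is_zero A Q \<longleftrightarrow> (\<exists>k. fps_nth Q k \<in> A - max_ideal A)"

definition lambda_inv :: "complex set \<Rightarrow> complex fps \<Rightarrow> nat" where
  "lambda_inv A Q = (LEAST k. fps_nth Q k \<noteq> 0 \<and> (\<forall>j. fps_nth Q j / fps_nth Q k \<in> A))"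

end

theory Submission
  imports Defs "Jordan_Normal_Form.Schur_Decomposition" "HOL-Algebra.Multiplicative_Group"
    "HOL.Binomial_Plus"
begin

(* Character values are sums of roots of unity, hence integral, and the binomial coefficients are
   integers; so congruent characters of the same degree give series that are congruent
   coefficientwise mod varpi. In terms of coefficients, mu = 0 says that some coefficient is a unit,
   and lambda is then the first index of a unit coefficient; both only depend on the coefficients
   mod varpi. *)

locale algebraic_valuation_ring =
  fixes A :: "complex set"
  assumes algebraic_mem: "x \<in> A \<Longrightarrow> algebraic x"
    and zero_mem: "0 \<in> A" and one_mem: "1 \<in> A"
    and add_mem: "x \<in> A \<Longrightarrow> y \<in> A \<Longrightarrow> x + y \<in> A"
    and diff_mem: "x \<in> A \<Longrightarrow> y \<in> A \<Longrightarrow> x - y \<in> A"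
    and mult_mem: "x \<in> A \<Longrightarrow> y \<in> A \<Longrightarrow> x * y \<in> A"
    and mem_or_inverse_mem: "algebraic x \<Longrightarrow> x \<noteq> 0 \<Longrightarrow> x \<in> A \<or> inverse x \<in> A"

lemma l_adic_valring_imp_algebraic_valuation_ring:
  "l_adic_valring l A \<Longrightarrow> algebraic_valuation_ring A"
  unfolding l_adic_valring_def algebraic_valuation_ring_def by blast

context algebraic_valuation_ring
begin

lemma uminus_mem: "x \<in> A \<Longrightarrow> - x \<in> A"
  using diff_mem[OF zero_mem] by fastforce

lemma of_nat_mem: "of_nat n \<in> A"
  by (induction n) (auto intro: zero_mem one_mem add_mem)

lemma of_int_mem: "of_int n \<in> A"
  using of_nat_mem[of "nat n"] uminus_mem[OF of_nat_mem, of "nat (- n)"]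
  by (cases "n \<ge> 0") simp_all

lemma sum_mem: "(\<And>i. i \<in> I \<Longrightarrow> f i \<in> A) \<Longrightarrow> sum f I \<in> A"
  by (induction I rule: infinite_finite_induct) (auto intro: zero_mem add_mem)

lemma power_mem: "x \<in> A \<Longrightarrow> x ^ n \<in> A"
  by (induction n) (auto intro: one_mem mult_mem)

lemma root_of_unity_mem:
  assumes z: "z ^ N = 1" and N: "N > 0"
  shows "z \<in> A"
proof (rule ccontr)
  assume "z \<notin> A"
  have "algebraic z"
    by (rule algebraic_root[of 1 "Polynomial.monom 1 N"])
       (use z N in \<open>auto simp: poly_monom coeff_monom degree_monom_eq\<close>)
  moreover have "z \<noteq> 0" using z N by (auto simp: power_0_left)
  ultimately have "inverse z \<in> A" using \<open>z \<notin> A\<close> mem_or_inverse_mem by blast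
  moreover have "inverse z ^ (N - 1) = z"
    using z N \<open>z \<noteq> 0\<close> by (metis power_minus_mult power_inverse inverse_unique)
  ultimately show False using power_mem \<open>z \<notin> A\<close> by metis
qed

lemma unit_iff: "x \<in> A - max_ideal A \<longleftrightarrow> x \<in> A \<and> x \<noteq> 0 \<and> inverse x \<in> A"
  unfolding max_ideal_def by auto

lemma max_ideal_subset: "max_ideal A \<subseteq> A"
  unfolding max_ideal_def by auto

lemma zero_in_max_ideal: "0 \<in> max_ideal A"
  using zero_mem unfolding max_ideal_def by auto

lemma one_not_in_max_ideal: "1 \<notin> max_ideal A"
  using one_mem unfolding max_ideal_def by auto

lemma mult_max_ideal:
  assumes a: "a \<in> A" and x: "x \<in> max_ideal A"
  shows "a * x \<in> max_ideal A"
proof (cases "a * x = 0")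
  case False
  have "inverse (a * x) \<notin> A"
  proof
    assume "inverse (a * x) \<in> A"
    then have "a * inverse (a * x) \<in> A" using a mult_mem by blast
    then show False using x False by (simp add: max_ideal_def field_simps)
  qed
  then show ?thesis using a x mult_mem max_ideal_subset unfolding max_ideal_def by blast
qed (use zero_mem in \<open>auto simp: max_ideal_def\<close>)

lemma uminus_max_ideal: "x \<in> max_ideal A \<Longrightarrow> - x \<in> max_ideal A"
  using mult_max_ideal[OF uminus_mem[OF one_mem]] by fastforce

text \<open>If \<open>x + y\<close> were a unit, then \<open>a = x/(x+y)\<close> and \<open>b = y/(x+y)\<close> would be non-units with
  \<open>a + b = 1\<close>; but one of \<open>b/a\<close>, \<open>a/b\<close> lies in \<open>A\<close>, making \<open>1/a = 1 + b/a\<close> or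
  \<open>1/b = 1 + a/b\<close> integral.\<close>
lemma add_max_ideal:
  assumes x: "x \<in> max_ideal A" and y: "y \<in> max_ideal A"
  shows "x + y \<in> max_ideal A"
proof (rule ccontr)
  assume "x + y \<notin> max_ideal A"
  moreover have "x + y \<in> A" using x y max_ideal_subset add_mem by blast
  ultimately have s: "x + y \<noteq> 0" "inverse (x + y) \<in> A" unfolding max_ideal_def by auto
  define a where "a = x / (x + y)"
  define b where "b = y / (x + y)"
  have a: "a \<in> max_ideal A" and b: "b \<in> max_ideal A"
    unfolding a_def b_def divide_inverse using mult_max_ideal[OF s(2)] x y
    by (simp_all add: mult.commute)
  have ab: "a + b = 1" unfolding a_def b_def using s(1) by (simp add: add_divide_distrib[symmetric])
  have "a \<noteq> 0" "b \<noteq> 0" using a b ab one_not_in_max_ideal by auto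
  then have "inverse a \<notin> A" "inverse b \<notin> A" using a b unfolding max_ideal_def by auto
  have "algebraic a" using a max_ideal_subset algebraic_mem by blast
  have "algebraic (b / a)"
    by (rule algebraic_root[OF algebraic_inverse[OF \<open>algebraic a\<close>], of "[:1, 1:]"])
       (use ab \<open>a \<noteq> 0\<close> in \<open>auto simp: field_simps coeff_pCons split: nat.splits\<close>)
  then consider "b / a \<in> A" | "inverse (b / a) \<in> A"
    using mem_or_inverse_mem \<open>a \<noteq> 0\<close> \<open>b \<noteq> 0\<close> by fastforce
  then show False
  proof cases
    case 1
    then have "1 + b / a \<in> A" using one_mem add_mem by blast
    then show False using \<open>inverse a \<notin> A\<close> ab \<open>a \<noteq> 0\<close> by (simp add: field_simps)
  next
    case 2
    then have "1 + a / b \<in> A" using one_mem add_mem by simp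
    then show False using \<open>inverse b \<notin> A\<close> ab \<open>b \<noteq> 0\<close> by (simp add: field_simps)
  qed
qed

lemma sum_max_ideal: "(\<And>i. i \<in> I \<Longrightarrow> f i \<in> max_ideal A) \<Longrightarrow> sum f I \<in> max_ideal A"
  by (induction I rule: infinite_finite_induct)
     (auto intro: add_max_ideal zero_in_max_ideal)

lemma unit_add_max_ideal:
  assumes u: "u \<in> A - max_ideal A" and e: "e \<in> max_ideal A"
  shows "u + e \<in> A - max_ideal A"
proof -
  have "u + e \<in> A" using u e max_ideal_subset add_mem by blast
  moreover have "u + e \<notin> max_ideal A"
    using add_max_ideal[OF _ uminus_max_ideal[OF e], of "u + e"] u by auto
  ultimately show ?thesis by blast
qed

lemma unit_iff_of_congruent:
  assumes "x - y \<in> max_ideal A"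
  shows "x \<in> A - max_ideal A \<longleftrightarrow> y \<in> A - max_ideal A"
proof
  assume "x \<in> A - max_ideal A"
  from unit_add_max_ideal[OF this uminus_max_ideal[OF assms]] show "y \<in> A - max_ideal A" by simp
next
  assume "y \<in> A - max_ideal A"
  from unit_add_max_ideal[OF this assms] show "x \<in> A - max_ideal A" by simp
qed

lemma mu_is_zero_congruent:
  assumes "\<And>k. fps_nth P k - fps_nth Q k \<in> max_ideal A"
  shows "mu_is_zero A P \<longleftrightarrow> mu_is_zero A Q"
  unfolding mu_is_zero_def using unit_iff_of_congruent[OF assms] by blast

text \<open>When \<open>\<mu> = 0\<close>, the coefficients of minimal valuation are exactly the units.\<close>
lemma lambda_inv_eq_Least_unit:
  assumes integral: "\<And>k. fps_nth Q k \<in> A" and "mu_is_zero A Q"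
  shows "lambda_inv A Q = (LEAST k. fps_nth Q k \<in> A - max_ideal A)"
proof -
  obtain k0 where k0: "fps_nth Q k0 \<in> A - max_ideal A"
    using \<open>mu_is_zero A Q\<close> unfolding mu_is_zero_def by blast
  have "fps_nth Q k \<noteq> 0 \<and> (\<forall>j. fps_nth Q j / fps_nth Q k \<in> A) \<longleftrightarrow>
        fps_nth Q k \<in> A - max_ideal A" for k
  proof
    assume divides: "fps_nth Q k \<noteq> 0 \<and> (\<forall>j. fps_nth Q j / fps_nth Q k \<in> A)"
    have "fps_nth Q k0 \<noteq> 0" using k0 unit_iff by blast
    then have "inverse (fps_nth Q k) = fps_nth Q k0 / fps_nth Q k * inverse (fps_nth Q k0)"
      using divides by (simp add: field_simps)
    also have "\<dots> \<in> A" using divides k0 mult_mem unit_iff by blast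
    finally show "fps_nth Q k \<in> A - max_ideal A" using divides integral unit_iff by blast
  next
    assume "fps_nth Q k \<in> A - max_ideal A"
    then show "fps_nth Q k \<noteq> 0 \<and> (\<forall>j. fps_nth Q j / fps_nth Q k \<in> A)"
      unfolding unit_iff divide_inverse using integral mult_mem by blast
  qed
  then show ?thesis unfolding lambda_inv_def by simp
qed

lemma lambda_inv_congruent:
  assumes integral: "\<And>k. fps_nth P k \<in> A"
    and congruent: "\<And>k. fps_nth P k - fps_nth Q k \<in> max_ideal A"
    and "mu_is_zero A P"
  shows "lambda_inv A P = lambda_inv A Q"
proof -
  have "fps_nth Q k \<in> A" for k
    using diff_mem[OF integral max_ideal_subset[THEN subsetD, OF congruent[of k]], of k] by simp
  moreover have "mu_is_zero A Q" using assms mu_is_zero_congruent[OF congruent] by blast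
  moreover have "lambda_inv A P = (LEAST k. fps_nth P k \<in> A - max_ideal A)"
    using assms by (intro lambda_inv_eq_Least_unit)
  moreover have "\<dots> = (LEAST k. fps_nth Q k \<in> A - max_ideal A)"
    using unit_iff_of_congruent[OF congruent] by simp
  ultimately show ?thesis by (simp add: lambda_inv_eq_Least_unit)
qed

end

lemma mat_trace_mult_comm:
  fixes X Y :: "'c::comm_ring_1 mat"
  assumes "X \<in> carrier_mat n n" "Y \<in> carrier_mat n n"
  shows "mat_trace (X * Y) = mat_trace (Y * X)"
proof -
  have "mat_trace (X * Y) = (\<Sum>i<n. \<Sum>k<n. X $$ (i, k) * Y $$ (k, i))"
    using assms by (simp add: mat_trace_def scalar_prod_def atLeast0LessThan)
  also have "\<dots> = (\<Sum>k<n. \<Sum>i<n. Y $$ (k, i) * X $$ (i, k))"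
    by (subst sum.swap) (simp add: mult.commute)
  also have "\<dots> = mat_trace (Y * X)"
    using assms by (simp add: mat_trace_def scalar_prod_def atLeast0LessThan)
  finally show ?thesis .
qed

lemma mat_trace_similar:
  fixes M B :: "'c::comm_ring_1 mat"
  assumes "similar_mat M B"
  shows "mat_trace M = mat_trace B"
proof -
  obtain n P Q where mats: "{M, B, P, Q} \<subseteq> carrier_mat n n"
    and QP: "Q * P = 1\<^sub>m n" and M: "M = P * B * Q"
    using similar_matD[OF assms] by blast
  then have B: "B \<in> carrier_mat n n" and P: "P \<in> carrier_mat n n" and Q: "Q \<in> carrier_mat n n"
    by auto
  have "mat_trace M = mat_trace (P * (B * Q))" using M by (simp add: assoc_mult_mat[OF P B Q])
  also have "\<dots> = mat_trace (B * Q * P)" using B P Q by (intro mat_trace_mult_comm) auto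
  also have "\<dots> = mat_trace B" using B QP by (simp add: assoc_mult_mat[OF B Q P])
  finally show ?thesis .
qed

lemma mat_trace_eq_sum_eigenvalues:
  fixes M :: "complex mat"
  assumes M: "M \<in> carrier_mat n n"
  obtains ev where "\<And>i. i < n \<Longrightarrow> eigenvalue M (ev i)" and "mat_trace M = (\<Sum>i<n. ev i)"
proof -
  obtain es where "char_poly M = (\<Prod>a \<leftarrow> es. [:- a, 1:])"
    using char_poly_factorized[OF M] by blast
  then obtain B where B: "B \<in> carrier_mat n n" "upper_triangular B" "similar_mat M B"
    using schur_decomposition_exists[OF M] by blast
  have "eigenvalue M (B $$ (i, i))" if "i < n" for i
  proof -
    have "B $$ (i, i) \<in> set (diag_mat B)" using that B(1) unfolding diag_mat_def by auto
    then have "poly (char_poly B) (B $$ (i, i)) = 0"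
      by (auto simp: char_poly_upper_triangular[OF B(1,2)] poly_prod_list prod_list_zero_iff)
    then show ?thesis using char_poly_similar[OF B(3)] eigenvalue_root_char_poly[OF M] by simp
  qed
  moreover have "mat_trace M = (\<Sum>i<n. B $$ (i, i))"
    using mat_trace_similar[OF B(3)] B(1) unfolding mat_trace_def by simp
  ultimately show thesis by (rule that)
qed

lemma eigenvalue_root_of_unity:
  fixes M :: "complex mat"
  assumes M: "M \<in> carrier_mat n n" and MN: "M ^\<^sub>m N = 1\<^sub>m n" and "eigenvalue M k"
  shows "k ^ N = 1"
proof -
  obtain v where v: "eigenvector M v k" using \<open>eigenvalue M k\<close> unfolding eigenvalue_def by blast
  then have "v \<in> carrier_vec n" "v \<noteq> 0\<^sub>v n" using M unfolding eigenvector_def by auto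
  then obtain i where i: "i < n" "v $ i \<noteq> 0" by (metis eq_vecI carrier_vecD index_zero_vec)
  have "v = k ^ N \<cdot>\<^sub>v v" using eigenvector_pow[OF M v, of N] MN \<open>v \<in> carrier_vec n\<close> by simp
  then have "v $ i = k ^ N * v $ i"
    using i \<open>v \<in> carrier_vec n\<close> by (metis index_smult_vec(1) carrier_vecD)
  then show ?thesis using i by simp
qed

lemma is_rep_nat_pow:
  assumes "group G" and rep: "is_rep G d \<rho>" and g: "g \<in> carrier G"
  shows "\<rho> (g [^]\<^bsub>G\<^esub> (k::nat)) = \<rho> g ^\<^sub>m k"
proof (induction k)
  case 0
  have "\<rho> g \<in> carrier_mat d d" using rep g unfolding is_rep_def by blast
  then show ?case using rep unfolding is_rep_def by simp
next
  case (Suc k)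
  interpret group G by fact
  have "\<rho> (g [^]\<^bsub>G\<^esub> Suc k) = \<rho> (g [^]\<^bsub>G\<^esub> k) * \<rho> g"
    using rep g unfolding is_rep_def by simp
  then show ?case using Suc by simp
qed

lemma is_rep_pow_order:
  assumes "group G" "is_rep G d \<rho>" "g \<in> carrier G"
  shows "\<rho> g ^\<^sub>m Coset.order G = 1\<^sub>m d"
  using is_rep_nat_pow[OF assms, of "Coset.order G"] group.pow_order_eq_1[OF assms(1,3)] assms(2)
  unfolding is_rep_def by simp

lemma Q_series_nth:
  assumes "finite S"
  shows "fps_nth (Q_series G S \<beta> \<chi>) k =
    (if k = 0 then of_nat (card S) * \<chi> \<one>\<^bsub>G\<^esub> else 0) -
    (\<Sum>t\<in>S. \<chi> t * ((of_int (\<beta> t) :: complex) gchoose k))"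
  unfolding Q_series_def by (simp add: fps_sum_nth)

context algebraic_valuation_ring
begin

text \<open>Character values are sums of eigenvalues, which are roots of unity.\<close>
lemma Irr_value_mem:
  assumes grp: "group G" and fin: "finite (carrier G)" and "\<chi> \<in> Irr G" and g: "g \<in> carrier G"
  shows "\<chi> g \<in> A"
proof -
  obtain d \<rho> where "is_irred_rep G d \<rho>"
    and \<chi>: "\<chi> = (\<lambda>g. if g \<in> carrier G then mat_trace (\<rho> g) else 0)"
    using \<open>\<chi> \<in> Irr G\<close> unfolding Irr_def by blast
  then have rep: "is_rep G d \<rho>" unfolding is_irred_rep_def by blast
  then have M: "\<rho> g \<in> carrier_mat d d" using g unfolding is_rep_def by blast
  obtain ev where ev: "\<And>i. i < d \<Longrightarrow> eigenvalue (\<rho> g) (ev i)"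
    and trace: "mat_trace (\<rho> g) = (\<Sum>i<d. ev i)"
    using mat_trace_eq_sum_eigenvalues[OF M] by blast
  have "Coset.order G > 0" using grp fin by (simp add: group.is_monoid monoid.order_gt_0_iff_finite)
  then have "ev i \<in> A" if "i < d" for i
    using root_of_unity_mem eigenvalue_root_of_unity[OF M is_rep_pow_order[OF grp rep g] ev] that
    by blast
  then have "(\<Sum>i<d. ev i) \<in> A" by (intro sum_mem) simp
  then show ?thesis using \<chi> trace g by simp
qed

lemma gbinomial_of_int_mem: "(of_int b :: complex) gchoose k \<in> A"
  using of_int_mem by (simp flip: of_int_gbinomial)

lemma Q_series_nth_mem:
  assumes "finite S" "\<chi> \<one>\<^bsub>G\<^esub> \<in> A" "\<And>t. t \<in> S \<Longrightarrow> \<chi> t \<in> A"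
  shows "fps_nth (Q_series G S \<beta> \<chi>) k \<in> A"
  using assms unfolding Q_series_nth[OF \<open>finite S\<close>]
  by (intro diff_mem sum_mem mult_mem gbinomial_of_int_mem) (auto intro: of_nat_mem zero_mem mult_mem)

lemma Q_series_nth_congruent:
  assumes "finite S" "\<chi>1 \<one>\<^bsub>G\<^esub> = \<chi>2 \<one>\<^bsub>G\<^esub>" "\<And>t. t \<in> S \<Longrightarrow> \<chi>1 t - \<chi>2 t \<in> max_ideal A"
  shows "fps_nth (Q_series G S \<beta> \<chi>1) k - fps_nth (Q_series G S \<beta> \<chi>2) k \<in> max_ideal A"
proof -
  have "fps_nth (Q_series G S \<beta> \<chi>1) k - fps_nth (Q_series G S \<beta> \<chi>2) k =
        (\<Sum>t\<in>S. ((of_int (\<beta> t) :: complex) gchoose k) * (\<chi>2 t - \<chi>1 t))"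
    using assms(2) unfolding Q_series_nth[OF \<open>finite S\<close>]
    by (cases "k = 0") (simp_all add: right_diff_distrib sum_subtractf mult.commute)
  also have "\<dots> \<in> max_ideal A"
    using uminus_max_ideal[OF assms(3)]
    by (intro sum_max_ideal mult_max_ideal gbinomial_of_int_mem) simp
  finally show ?thesis .
qed

end

theorem proposition3p8:
  fixes G :: "('a, 'b) monoid_scheme" and S :: "'a set" and l :: nat
    and \<beta> :: "'a \<Rightarrow> int" and A :: "complex set"
    and \<chi>1 \<chi>2 :: "'a \<Rightarrow> complex" and d :: nat
  assumes grp: "group G" and fin: "finite (carrier G)"
    and S_sub: "S \<subseteq> carrier G"
    and S_conj: "\<forall>g\<in>carrier G. (\<lambda>s. g \<otimes>\<^bsub>G\<^esub> s \<otimes>\<^bsub>G\<^esub> inv\<^bsub>G\<^esub> g) ` S = S"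
    and S_gen: "generate G S = carrier G"
    and S_inv: "\<forall>s\<in>S. inv\<^bsub>G\<^esub> s \<in> S"
    and S_one: "\<one>\<^bsub>G\<^esub> \<notin> S"
    and not_cycle: "\<not> is_cycle_graph (carrier G) (cayley_adj G S)"
    and l_prime: "prime l"
    and beta_conj: "\<forall>g\<in>carrier G. \<forall>a\<in>S. \<beta> (g \<otimes>\<^bsub>G\<^esub> a \<otimes>\<^bsub>G\<^esub> inv\<^bsub>G\<^esub> g) = \<beta> a"
    and beta_gen: "\<exists>s\<in>S. \<not> int l dvd \<beta> s"
    and beta_inv: "\<forall>s\<in>S. \<beta> (inv\<^bsub>G\<^esub> s) = - \<beta> s"
    and beta_nonhom: "\<exists>hs. length hs > 0 \<and> set hs \<subseteq> S \<and>
                        foldr (\<otimes>\<^bsub>G\<^esub>) hs \<one>\<^bsub>G\<^esub> \<in> S \<and>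
                        \<not> (int l dvd (\<beta> (foldr (\<otimes>\<^bsub>G\<^esub>) hs \<one>\<^bsub>G\<^esub>) - sum_list (map \<beta> hs)))"
    and emb: "l_adic_valring l A"
    and chi1: "\<chi>1 \<in> Irr G" and chi2: "\<chi>2 \<in> Irr G"
    and cong: "\<forall>g\<in>carrier G. \<chi>1 g - \<chi>2 g \<in> max_ideal A"
    and deg1: "\<chi>1 \<one>\<^bsub>G\<^esub> = of_nat d" and deg2: "\<chi>2 \<one>\<^bsub>G\<^esub> = of_nat d"
    and d_coprime: "\<not> l dvd d"
  shows "(mu_is_zero A (Q_series G S \<beta> \<chi>1) \<longleftrightarrow> mu_is_zero A (Q_series G S \<beta> \<chi>2)) \<and>
         (mu_is_zero A (Q_series G S \<beta> \<chi>1) \<longrightarrow>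
            lambda_inv A (Q_series G S \<beta> \<chi>1) = lambda_inv A (Q_series G S \<beta> \<chi>2))"
proof -
  interpret algebraic_valuation_ring A
    using emb by (rule l_adic_valring_imp_algebraic_valuation_ring)
  have finS: "finite S" using S_sub fin finite_subset by blast
  have one: "\<one>\<^bsub>G\<^esub> \<in> carrier G" using grp by (simp add: group.is_monoid monoid.one_closed)
  have "fps_nth (Q_series G S \<beta> \<chi>1) k \<in> A" for k
    using Q_series_nth_mem[OF finS] Irr_value_mem[OF grp fin chi1] one S_sub by blast
  moreover have congruent:
    "fps_nth (Q_series G S \<beta> \<chi>1) k - fps_nth (Q_series G S \<beta> \<chi>2) k \<in> max_ideal A" for k
    using cong S_sub by (intro Q_series_nth_congruent[OF finS]) (auto simp: deg1 deg2)
  ultimately show ?thesis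
    using mu_is_zero_congruent[OF congruent] lambda_inv_congruent[OF _ congruent] by blast
qed

end
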